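(* Consider the robust matrix completion iteration described in the context (instantiated with $l_{g,c}$ being any of the HOW, HOC or HOP functions). Then the real sequence $\big\{\mathcal{L}_{g,c^k}(\mathbf U^k,\mathbf V^k,\mathbf S^k)\big\}_{k\ge1}$ converges.
   Context: Data: a matrix $\mathbf X\in\mathbb{R}^{m\times n}$, an index set $\Omega\subset\{1,\dots,m\}\times\{1,\dots,n\}$ of observed entries, a target rank $r\ll\min(m,n)$. For a matrix $\mathbf A$, $\mathbf A_\Omega$ keeps the entries with indices in $\Omega$ and sets the others to $0$. Loss functions: for $c>0$ and a continuous, nondecreasing, differentiable function $g$ on $(0,\infty)$ with $g'(c)>0$, set $a=c/g'(c)$, $b=c^2/2-a\,g(c)$ and $l_{g,c}(x)=x^2/2$ if $|x|\le c$, $l_{g,c}(x)=a\,g(|x|)+b$ if $|x|>c$. The three instances are: HOW ($g(x)=\frac{\sigma^2}{2}(1-e^{-x^2/\sigma^2})$, $\sigma>0$), HOC ($g(x)=\frac{\gamma^2}{2}\ln(1+x^2/\gamma^2)$, $\gamma>0$), HOP ($g(x)=|x|^p$, $0<p\le1$). In each case $x\mapsto x^2/2-l_{g,c}(x)$ is convex and differentiable. Define $\varphi_{g,c}(y)=\sup_{t}[l_{g,c}(t)-(t-y)^2/2]$ and $P_{\varphi_{g,c}}(x)=\max\{0,|x|-a\,g'(|x|)\}\operatorname{sign}(x)$ (value $0$ at $x=0$), the minimizer of $y\mapsto (x-y)^2/2+\varphi_{g,c}(y)$. For matrices, $l_{g,c}$, $\varphi_{g,c}$ are summed entrywise and $P_{\varphi_{g,c}}$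 acts entrywise. Objective: $\mathcal{L}_{g,c}(\mathbf U,\mathbf V,\mathbf S)=\tfrac12\|\mathbf X_\Omega-(\mathbf U\mathbf V)_\Omega-\mathbf S_\Omega\|_F^2+\sum_{(i,j)\in\Omega}\varphi_{g,c}(S_{ij})$ for $\mathbf U\in\mathbb{R}^{m\times r}$, $\mathbf V\in\mathbb{R}^{r\times n}$, $\mathbf S\in\mathbb{R}^{m\times n}$ with $\mathbf S_{\Omega^c}=\mathbf 0$. Iteration (given initial $\mathbf U^0,\mathbf V^0$, a constant $\xi>0$, and $c^{-1}=+\infty$): for $k=0,1,2,\dots$: (i) $\mathbf D^k=\mathbf X-\mathbf U^k\mathbf V^k$; $d^k=\mathrm{IQR}(\mathrm{vec}(\mathbf D^k_\Omega))/1.349$ where IQR is the sample interquartile range of the entries indexed by $\Omega$; $c^k=\min\{\xi d^k,c^{k-1}\}$. (ii) $\mathbf S^{k+1}_\Omega=P_{\varphi_{g,c^k}}(\mathbf D^k_\Omega)$, $\mathbf S^{k+1}_{\Omega^c}=\mathbf 0$; $\mathbf H=\mathbf X_\Omega-\mathbf S^{k+1}_\Omega$. (iii) With $h(\mathbf U,\mathbf V)=\tfrac12\|\mathbf H_\Omega-(\mathbf U\mathbf V)_\Omega\|_F^2$, $\nabla_{\mathbf U}h=-(\mathbf H_\Omega-(\mathbf U\mathbf V)_\Omega)\mathbf V^T$, $\nabla_{\mathbf V}h=-\mathbf U^T(\mathbf H_\Omega-(\mathbf U\mathbf V)_\Omega)$: set $\widetilde\nabla_{\mathbf U}=\nabla_{\mathbf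 U}h(\mathbf U^k,\mathbf V^k)(\mathbf V^k\mathbf V^{kT})^{-1}$, $\mu_{\mathbf U}=\langle\nabla_{\mathbf U}h,\widetilde\nabla_{\mathbf U}\rangle/\|(\widetilde\nabla_{\mathbf U}\mathbf V^k)_\Omega\|_F^2$, $\mathbf U^{k+1}=\mathbf U^k-\mu_{\mathbf U}\widetilde\nabla_{\mathbf U}$; then $\widetilde\nabla_{\mathbf V}=(\mathbf U^{k+1T}\mathbf U^{k+1})^{-1}\nabla_{\mathbf V}h(\mathbf U^{k+1},\mathbf V^k)$, $\mu_{\mathbf V}=\langle\nabla_{\mathbf V}h,\widetilde\nabla_{\mathbf V}\rangle/\|(\mathbf U^{k+1}\widetilde\nabla_{\mathbf V})_\Omega\|_F^2$, $\mathbf V^{k+1}=\mathbf V^k-\mu_{\mathbf V}\widetilde\nabla_{\mathbf V}$ (scaled alternating steepest descent). *)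

theory Defs
  imports "HOL-Analysis.Analysis" "HOL-Library.Multiset"
begin

definition g_how :: "real \<Rightarrow> real \<Rightarrow> real" where
  "g_how \<sigma> x = \<sigma>^2 / 2 * (1 - exp (- (x^2) / \<sigma>^2))"

definition g_hoc :: "real \<Rightarrow> real \<Rightarrow> real" where
  "g_hoc \<gamma> x = \<gamma>^2 / 2 * ln (1 + x^2 / \<gamma>^2)"

definition g_hop :: "real \<Rightarrow> real \<Rightarrow> real" where
  "g_hop p x = \<bar>x\<bar> powr p"

definition a_par :: "(real \<Rightarrow> real) \<Rightarrow> real \<Rightarrow> real" where
  "a_par g c = c / deriv g c"

definition b_par :: "(real \<Rightarrow> real) \<Rightarrow> real \<Rightarrow> real" where
  "b_par g c = c^2 / 2 - a_par g c * g c"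

definition l_gc :: "(real \<Rightarrow> real) \<Rightarrow> real \<Rightarrow> real \<Rightarrow> real" where
  "l_gc g c x = (if \<bar>x\<bar> \<le> c then x^2 / 2 else a_par g c * g \<bar>x\<bar> + b_par g c)"

definition phi_gc :: "(real \<Rightarrow> real) \<Rightarrow> real \<Rightarrow> real \<Rightarrow> real" where
  "phi_gc g c y = (SUP t. l_gc g c t - (t - y)^2 / 2)"

definition prox_gc :: "(real \<Rightarrow> real) \<Rightarrow> real \<Rightarrow> real \<Rightarrow> real" where
  "prox_gc g c x = (if x = 0 then 0 else max 0 (\<bar>x\<bar> - a_par g c * deriv g \<bar>x\<bar>) * sgn x)"

definition maskO :: "('m \<times> 'n) set \<Rightarrow> real^'n^'m \<Rightarrow> real^'n^'m" where
  "maskO \<Omega> A = (\<chi> i j. if (i, j) \<in> \<Omega> then A $ i $ j else 0)"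

definition loss_L :: "(real \<Rightarrow> real) \<Rightarrow> real \<Rightarrow> real^'n^'m \<Rightarrow> ('m::finite \<times> 'n::finite) set
    \<Rightarrow> real^'r^'m \<Rightarrow> real^'n^'r \<Rightarrow> real^'n^'m \<Rightarrow> real" where
  "loss_L g c X \<Omega> U V S =
     (norm (maskO \<Omega> X - maskO \<Omega> (U ** V) - maskO \<Omega> S))^2 / 2
     + (\<Sum>(i, j)\<in>\<Omega>. phi_gc g c (S $ i $ j))"

text \<open>Sample quantile of a sorted list (linear interpolation, "type 7" convention,
  0-indexed: h = (N-1) q).\<close>
definition quantile7 :: "real list \<Rightarrow> real \<Rightarrow> real" where
  "quantile7 xs q = (let h = (real (length xs) - 1) * q; lo = nat \<lfloor>h\<rfloor> in
      xs ! lo + (h - real lo) * (xs ! (lo + 1) - xs ! lo))"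

definition sample_iqr :: "real multiset \<Rightarrow> real" where
  "sample_iqr M = (let xs = sorted_list_of_multiset M in quantile7 xs (3/4) - quantile7 xs (1/4))"

definition entries_on :: "('m \<times> 'n) set \<Rightarrow> real^'n^'m \<Rightarrow> real multiset" where
  "entries_on \<Omega> D = image_mset (\<lambda>(i, j). D $ i $ j) (mset_set \<Omega>)"

definition d_scale :: "('m \<times> 'n) set \<Rightarrow> real^'n^'m \<Rightarrow> real" where
  "d_scale \<Omega> D = sample_iqr (entries_on \<Omega> D) / 1.349"

text \<open>One scaled alternating steepest descent step on h(U,V) = 1/2 ||H_\<Omega> - (UV)_\<Omega>||_F^2.\<close>
definition sasd_U :: "('m::finite \<times> 'n::finite) set \<Rightarrow> real^'n^'m \<Rightarrow> real^'r::finite^'m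
    \<Rightarrow> real^'n^'r \<Rightarrow> real^'r^'m" where
  "sasd_U \<Omega> H U V =
    (let G = - ((maskO \<Omega> H - maskO \<Omega> (U ** V)) ** transpose V);
         T = G ** matrix_inv (V ** transpose V);
         \<mu> = (G \<bullet> T) / (norm (maskO \<Omega> (T ** V)))^2
     in U - \<mu> *\<^sub>R T)"

definition sasd_V :: "('m::finite \<times> 'n::finite) set \<Rightarrow> real^'n^'m \<Rightarrow> real^'r::finite^'m
    \<Rightarrow> real^'n^'r \<Rightarrow> real^'n^'r" where
  "sasd_V \<Omega> H U V =
    (let G = - (transpose U ** (maskO \<Omega> H - maskO \<Omega> (U ** V)));
         T = matrix_inv (transpose U ** U) ** G;
         \<mu> = (G \<bullet> T) / (norm (maskO \<Omega> (U ** T)))^2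
     in V - \<mu> *\<^sub>R T)"

text \<open>rmc_iter ... k = (U^k, V^k, S^k, c^{k-1}) for k \<ge> 1; for k = 0 the last two
  components are placeholders (S^0 unused, c^{-1} = +\<infinity> handled by the case k = 0).\<close>
primrec rmc_iter :: "(real \<Rightarrow> real) \<Rightarrow> real \<Rightarrow> real^'n^'m \<Rightarrow> ('m::finite \<times> 'n::finite) set
    \<Rightarrow> real^'r::finite^'m \<Rightarrow> real^'n^'r \<Rightarrow> nat
    \<Rightarrow> (real^'r^'m) \<times> (real^'n^'r) \<times> (real^'n^'m) \<times> real" where
  "rmc_iter g \<xi> X \<Omega> U0 V0 0 = (U0, V0, 0, 0)"
| "rmc_iter g \<xi> X \<Omega> U0 V0 (Suc k) =
    (case rmc_iter g \<xi> X \<Omega> U0 V0 k of (U, V, S, cprev) \<Rightarrow>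
      (let D = X - U ** V;
           d = d_scale \<Omega> D;
           c = (if k = 0 then \<xi> * d else min (\<xi> * d) cprev);
           S' = (\<chi> i j. if (i, j) \<in> \<Omega> then prox_gc g c (D $ i $ j) else 0);
           H = maskO \<Omega> X - maskO \<Omega> S';
           U' = sasd_U \<Omega> H U V;
           V' = sasd_V \<Omega> H U' V
       in (U', V', S', c)))"

definition U_it where "U_it g \<xi> X \<Omega> U0 V0 k = fst (rmc_iter g \<xi> X \<Omega> U0 V0 k)"
definition V_it where "V_it g \<xi> X \<Omega> U0 V0 k = fst (snd (rmc_iter g \<xi> X \<Omega> U0 V0 k))"
definition S_it where "S_it g \<xi> X \<Omega> U0 V0 k = fst (snd (snd (rmc_iter g \<xi> X \<Omega> U0 V0 k)))"
text \<open>c^k (computed in step k, stored in state k+1).\<close>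
definition c_it where "c_it g \<xi> X \<Omega> U0 V0 k = snd (snd (snd (rmc_iter g \<xi> X \<Omega> U0 V0 (Suc k))))"
definition d_it where "d_it g \<xi> X \<Omega> U0 V0 k =
   d_scale \<Omega> (X - U_it g \<xi> X \<Omega> U0 V0 k ** V_it g \<xi> X \<Omega> U0 V0 k)"

end

(*
  The loss sequence is nonincreasing and bounded below by 0, hence convergent. One sweep of the
  iteration lowers it in three steps: shrinking the threshold c lowers l_{g,c} and with it
  phi_{g,c}; the S-update minimises the objective in S, because P_phi is the derivative of the
  convex function x^2/2 - l_{g,c}, so the supremum defining phi_{g,c}(P_phi x) is attained at
  t = x; and each scaled steepest descent step is an exact line search along some direction,
  which cannot increase the data-fit term. Convexity of x^2/2 - l_{g,c} holds as soon as
  g'(s) = s w(s) with w positive and nonincreasing, which covers HOW, HOC and HOP.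
*)

theory Submission
  imports Defs
begin

section \<open>The loss functions and their proximal maps\<close>

lemma has_real_derivative_glue:
  fixes f h :: "real \<Rightarrow> real"
  assumes f: "(f has_real_derivative D) (at x)" and h: "(h has_real_derivative D) (at x)"
    and fh: "f x = h x"
  shows "((\<lambda>t. if t \<le> x then f t else h t) has_real_derivative D) (at x)"
proof -
  let ?F = "\<lambda>t. if t \<le> x then f t else h t"
  have "((\<lambda>y. (f y - f x) / (y - x)) \<longlongrightarrow> D) (at_left x)"
    using f by (auto simp: has_field_derivative_iff intro: filterlim_mono at_le)
  then have left: "((\<lambda>y. (?F y - ?F x) / (y - x)) \<longlongrightarrow> D) (at_left x)"
    by (rule Lim_transform_eventually) (auto simp: eventually_at_filter)
  have "((\<lambda>y. (h y - h x) / (y - x)) \<longlongrightarrow> D) (at_right x)"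
    using h by (auto simp: has_field_derivative_iff intro: filterlim_mono at_le)
  then have right: "((\<lambda>y. (?F y - ?F x) / (y - x)) \<longlongrightarrow> D) (at_right x)"
    by (rule Lim_transform_eventually) (auto simp: eventually_at_filter fh)
  show ?thesis
    using left right by (simp add: has_field_derivative_iff filterlim_at_split)
qed

lemma prox_gc_0 [simp]: "prox_gc g c 0 = 0"
  by (simp add: prox_gc_def)

text \<open>w is the weight of iteratively reweighted least squares; w nonincreasing is what makes
  x^2/2 - l_{g,c} convex.\<close>
locale robust_weight =
  fixes g w :: "real \<Rightarrow> real"
  assumes g_deriv: "\<And>s. 0 < s \<Longrightarrow> (g has_real_derivative s * w s) (at s)"
    and w_pos: "\<And>s. 0 < s \<Longrightarrow> 0 < w s"
    and w_antimono: "\<And>s t. 0 < s \<Longrightarrow> s \<le> t \<Longrightarrow> w t \<le> w s"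
begin

lemma a_par_eq: "0 < c \<Longrightarrow> a_par g c = 1 / w c"
  using DERIV_imp_deriv[OF g_deriv, of c] w_pos[of c] by (simp add: a_par_def)

lemma l_gc_tail: "0 < c \<Longrightarrow> c < \<bar>t\<bar> \<Longrightarrow> l_gc g c t = c\<^sup>2 / 2 + (g \<bar>t\<bar> - g c) / w c"
  by (simp add: l_gc_def b_par_def a_par_eq diff_divide_distrib)

lemma prox_gc_eq:
  assumes c: "0 < c"
  shows "prox_gc g c t = t * max 0 (1 - w \<bar>t\<bar> / w c)"
proof (cases "t = 0")
  case False
  have "max 0 (\<bar>t\<bar> - a_par g c * deriv g \<bar>t\<bar>) = \<bar>t\<bar> * max 0 (1 - w \<bar>t\<bar> / w c)"
    using DERIV_imp_deriv[OF g_deriv, of "\<bar>t\<bar>"] False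
    by (simp add: a_par_eq[OF c] max_mult_distrib_left algebra_simps)
  then show ?thesis
    using False by (simp add: prox_gc_def mult.assoc[symmetric] mult.commute[of _ "sgn t"] sgn_mult_abs)
qed (simp add: prox_gc_def)

lemma prox_gc_small: "0 < c \<Longrightarrow> \<bar>t\<bar> \<le> c \<Longrightarrow> prox_gc g c t = 0"
  by (cases "t = 0") (auto simp: prox_gc_eq w_antimono w_pos)

lemma prox_gc_minus: "prox_gc g c (- t) = - prox_gc g c t"
  by (simp add: prox_gc_def)

lemma prox_gc_nonneg: "0 < c \<Longrightarrow> 0 \<le> t \<Longrightarrow> 0 \<le> prox_gc g c t"
  by (simp add: prox_gc_eq)

lemma prox_gc_mono_nonneg:
  assumes "0 < c" "0 \<le> s" "s \<le> t"
  shows "prox_gc g c s \<le> prox_gc g c t"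
proof (cases "s = 0")
  case False
  then have "w t / w c \<le> w s / w c"
    using assms w_antimono[of s t] w_pos[of c] by (simp add: divide_right_mono)
  then show ?thesis
    using assms by (simp add: prox_gc_eq mult_mono)
qed (use assms prox_gc_nonneg in auto)

lemma prox_gc_mono:
  assumes c: "0 < c" and st: "s \<le> t"
  shows "prox_gc g c s \<le> prox_gc g c t"
proof -
  consider "0 \<le> s" | "t \<le> 0" | "s < 0" "0 < t" by linarith
  then show ?thesis
  proof cases
    case 2
    then show ?thesis
      using prox_gc_mono_nonneg[OF c, of "- t" "- s"] st by (simp add: prox_gc_minus)
  next
    case 3
    then show ?thesis
      using prox_gc_nonneg[OF c, of t] prox_gc_nonneg[OF c, of "- s"] by (simp add: prox_gc_minus)
  qed (use prox_gc_mono_nonneg[OF c] st in auto)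
qed

lemma prox_gc_antimono_threshold:
  assumes "0 < c'" "c' \<le> c" "0 \<le> t"
  shows "prox_gc g c t \<le> prox_gc g c' t"
proof (cases "t = 0")
  case False
  have "w \<bar>t\<bar> / w c' \<le> w \<bar>t\<bar> / w c"
    using assms False w_pos[of "\<bar>t\<bar>"] w_pos[of c'] w_pos[of c] w_antimono[of c' c]
    by (intro divide_left_mono) auto
  then show ?thesis
    using assms by (simp add: prox_gc_eq mult_left_mono)
qed simp

definition psi_gc :: "real \<Rightarrow> real \<Rightarrow> real" where
  "psi_gc c t = t\<^sup>2 / 2 - l_gc g c t"

lemma psi_gc_small: "\<bar>t\<bar> \<le> c \<Longrightarrow> psi_gc c t = 0"
  by (simp add: psi_gc_def l_gc_def)

lemma psi_gc_minus: "psi_gc c (- t) = psi_gc c t"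
  by (simp add: psi_gc_def l_gc_def)

lemma psi_gc_deriv_nonneg:
  assumes c: "0 < c" and t: "0 \<le> t"
  shows "(psi_gc c has_real_derivative prox_gc g c t) (at t)"
proof -
  define r where "r s = s\<^sup>2 / 2 - c\<^sup>2 / 2 - (g s - g c) / w c" for s
  have r_deriv: "(r has_real_derivative s * (1 - w s / w c)) (at s)" if "0 < s" for s
    unfolding r_def[abs_def] using that w_pos[OF c]
    by (auto intro!: derivative_eq_intros g_deriv simp: field_simps)
  have psi_eq: "psi_gc c s = (if s \<le> c then 0 else r s)" if "0 < s" for s
    using that c by (simp add: psi_gc_def r_def l_gc_tail) (simp add: l_gc_def)
  have prox_tail: "prox_gc g c s = s * (1 - w s / w c)" if "c \<le> s" for s
    using that c w_antimono[OF c that] w_pos[OF c] by (simp add: prox_gc_eq)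
  consider "t < c" | "c < t" | "t = c" by linarith
  then show ?thesis
  proof cases
    case 1
    have "((\<lambda>_. 0) has_real_derivative prox_gc g c t) (at t)"
      using 1 t c by (simp add: prox_gc_small)
    then show ?thesis
      by (rule has_field_derivative_transform_within_open[where S = "{- c<..<c}"])
        (use 1 t in \<open>auto simp: psi_gc_small\<close>)
  next
    case 2
    have "(r has_real_derivative prox_gc g c t) (at t)"
      using r_deriv[of t] 2 c prox_tail[of t] by simp
    then show ?thesis
      by (rule has_field_derivative_transform_within_open[where S = "{c<..}"])
        (use 2 c in \<open>auto simp: psi_eq\<close>)
  next
    case 3
    have "(r has_real_derivative 0) (at c)"
      using r_deriv[OF c] w_pos[OF c] by simp
    then have "((\<lambda>s. if s \<le> c then 0 else r s) has_real_derivative 0) (at c)"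
      by (rule has_real_derivative_glue[OF DERIV_const]) (simp add: r_def)
    moreover have "prox_gc g c c = 0"
      using c by (simp add: prox_gc_small)
    ultimately have "((\<lambda>s. if s \<le> c then 0 else r s) has_real_derivative prox_gc g c t) (at t)"
      using 3 by simp
    then show ?thesis
      by (rule has_field_derivative_transform_within_open[where S = "{0<..}"])
        (use 3 c in \<open>auto simp: psi_eq\<close>)
  qed
qed

lemma psi_gc_deriv:
  assumes c: "0 < c"
  shows "(psi_gc c has_real_derivative prox_gc g c t) (at t)"
proof (cases "0 \<le> t")
  case False
  then have "(psi_gc c has_real_derivative prox_gc g c (- t)) (at (- t))"
    by (intro psi_gc_deriv_nonneg c) simp
  then show ?thesis
    by (simp add: DERIV_mirror psi_gc_minus prox_gc_minus)
qed (rule psi_gc_deriv_nonneg[OF c])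

lemma psi_gc_above_tangent:
  assumes c: "0 < c"
  shows "psi_gc c x + prox_gc g c x * (t - x) \<le> psi_gc c t"
proof -
  have "convex_on UNIV (psi_gc c)"
    by (rule convex_on_realI[where f' = "prox_gc g c"]) (auto intro: psi_gc_deriv[OF c] prox_gc_mono[OF c])
  from convex_on_imp_above_tangent[OF this connected_UNIV _ _ psi_gc_deriv[OF c, of x]]
  show ?thesis
    by (simp add: algebra_simps)
qed

lemma l_gc_prox_gap_le:
  assumes c: "0 < c"
  shows "l_gc g c t - (t - prox_gc g c x)\<^sup>2 / 2 \<le> l_gc g c x - (x - prox_gc g c x)\<^sup>2 / 2"
  using psi_gc_above_tangent[OF c, of x t] by (simp add: psi_gc_def power2_eq_square field_simps)

lemma g_mono:
  assumes "0 < s" "s \<le> t"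
  shows "g s \<le> g t"
proof (rule DERIV_nonneg_imp_nondecreasing[OF assms(2)])
  fix x assume "s \<le> x"
  then have "0 < x" using assms by simp
  then show "\<exists>y. (g has_real_derivative y) (at x) \<and> 0 \<le> y"
    using g_deriv w_pos[of x] by (intro exI[of _ "x * w x"]) simp
qed

lemma l_gc_nonneg:
  assumes c: "0 < c"
  shows "0 \<le> l_gc g c t"
proof (cases "\<bar>t\<bar> \<le> c")
  case False
  then have "0 \<le> (g \<bar>t\<bar> - g c) / w c"
    using g_mono[OF c, of "\<bar>t\<bar>"] w_pos[OF c] by simp
  then show ?thesis
    using False c by (simp add: l_gc_tail)
qed (simp add: l_gc_def)

lemma psi_gc_antimono_threshold:
  assumes c': "0 < c'" and cc: "c' \<le> c"
  shows "psi_gc c t \<le> psi_gc c' t"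
proof -
  have c: "0 < c" using c' cc by simp
  have "psi_gc c' 0 - psi_gc c 0 \<le> psi_gc c' \<bar>t\<bar> - psi_gc c \<bar>t\<bar>"
  proof (rule DERIV_nonneg_imp_nondecreasing[of 0 "\<bar>t\<bar>" "\<lambda>s. psi_gc c' s - psi_gc c s"])
    fix s :: real assume "0 \<le> s"
    then show "\<exists>y. ((\<lambda>s. psi_gc c' s - psi_gc c s) has_real_derivative y) (at s) \<and> 0 \<le> y"
      using prox_gc_antimono_threshold[OF c' cc] psi_gc_deriv[OF c'] psi_gc_deriv[OF c]
      by (intro exI[of _ "prox_gc g c' s - prox_gc g c s"]) (auto intro!: derivative_eq_intros)
  qed simp
  moreover have "psi_gc c' \<bar>t\<bar> = psi_gc c' t" "psi_gc c \<bar>t\<bar> = psi_gc c t"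
    by (cases "0 \<le> t"; simp add: psi_gc_minus)+
  ultimately show ?thesis
    using c c' by (simp add: psi_gc_small)
qed

lemma l_gc_mono_threshold: "0 < c' \<Longrightarrow> c' \<le> c \<Longrightarrow> l_gc g c' t \<le> l_gc g c t"
  using psi_gc_antimono_threshold[of c' c t] by (simp add: psi_gc_def)

lemma l_gc_gap_le_gap_at_prox:
  assumes "0 < c'" "c' \<le> c"
  shows "l_gc g c' t - (t - prox_gc g c x)\<^sup>2 / 2 \<le> l_gc g c x - (x - prox_gc g c x)\<^sup>2 / 2"
  using l_gc_mono_threshold[OF assms, of t] l_gc_prox_gap_le[of c t x] assms by simp

lemma phi_gc_prox_le:
  assumes "0 < c'" "c' \<le> c"
  shows "phi_gc g c' (prox_gc g c x) \<le> l_gc g c x - (x - prox_gc g c x)\<^sup>2 / 2"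
  unfolding phi_gc_def by (intro cSUP_least l_gc_gap_le_gap_at_prox[OF assms]) simp

lemma le_phi_gc_prox:
  assumes "0 < c'" "c' \<le> c"
  shows "l_gc g c' t - (t - prox_gc g c x)\<^sup>2 / 2 \<le> phi_gc g c' (prox_gc g c x)"
  unfolding phi_gc_def
  by (intro cSUP_upper bdd_aboveI2[OF l_gc_gap_le_gap_at_prox[OF assms]]) simp

end

lemma robust_weight_how:
  assumes "0 < \<sigma>"
  shows "robust_weight (g_how \<sigma>) (\<lambda>s. exp (- (s\<^sup>2) / \<sigma>\<^sup>2))"
proof
  fix s t :: real
  show "(g_how \<sigma> has_real_derivative s * exp (- (s\<^sup>2) / \<sigma>\<^sup>2)) (at s)"
    unfolding g_how_def[abs_def] using assms
    by (auto intro!: derivative_eq_intros simp: field_simps power2_eq_square)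
  show "0 < exp (- (s\<^sup>2) / \<sigma>\<^sup>2)" by simp
  assume "0 < s" "s \<le> t"
  then show "exp (- (t\<^sup>2) / \<sigma>\<^sup>2) \<le> exp (- (s\<^sup>2) / \<sigma>\<^sup>2)"
    by (simp add: divide_right_mono power_mono)
qed

lemma robust_weight_hoc:
  assumes "0 < \<gamma>"
  shows "robust_weight (g_hoc \<gamma>) (\<lambda>s. 1 / (1 + s\<^sup>2 / \<gamma>\<^sup>2))"
proof
  fix s t :: real
  have pos: "0 < 1 + s\<^sup>2 / \<gamma>\<^sup>2" by (simp add: add_pos_nonneg)
  then show "(g_hoc \<gamma> has_real_derivative s * (1 / (1 + s\<^sup>2 / \<gamma>\<^sup>2))) (at s)"
    unfolding g_hoc_def[abs_def] using assms
    by (auto intro!: derivative_eq_intros simp: field_simps power2_eq_square)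
  show "0 < 1 / (1 + s\<^sup>2 / \<gamma>\<^sup>2)" using pos by simp
  assume "0 < s" "s \<le> t"
  then show "1 / (1 + t\<^sup>2 / \<gamma>\<^sup>2) \<le> 1 / (1 + s\<^sup>2 / \<gamma>\<^sup>2)"
    by (auto intro!: divide_left_mono divide_right_mono power_mono add_pos_nonneg mult_pos_pos)
qed

lemma robust_weight_hop:
  assumes "0 < p" "p \<le> 2"
  shows "robust_weight (g_hop p) (\<lambda>s. p * s powr (p - 2))"
proof
  fix s t :: real
  assume s: "0 < s"
  have "((\<lambda>x. x powr p) has_real_derivative p * s powr (p - 1)) (at s)"
    using s by (auto intro!: derivative_eq_intros)
  then have "(g_hop p has_real_derivative p * s powr (p - 1)) (at s)"
    by (rule has_field_derivative_transform_within_open[where S = "{0<..}"])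
      (use s in \<open>auto simp: g_hop_def\<close>)
  moreover have "p * s powr (p - 1) = s * (p * s powr (p - 2))"
    using s by (simp add: powr_diff field_simps powr_numeral power2_eq_square)
  ultimately show "(g_hop p has_real_derivative s * (p * s powr (p - 2))) (at s)"
    by simp
  show "0 < p * s powr (p - 2)"
    using assms s by simp
  assume "s \<le> t"
  then show "p * t powr (p - 2) \<le> p * s powr (p - 2)"
    using assms s by (intro mult_left_mono powr_mono2') auto
qed
section \<open>Masked matrices and the descent steps\<close>

lemma maskO_diff: "maskO \<Omega> (A - B) = maskO \<Omega> A - maskO \<Omega> B"
  by (simp add: maskO_def vec_eq_iff)

lemma maskO_add: "maskO \<Omega> (A + B) = maskO \<Omega> A + maskO \<Omega> B"
  by (simp add: maskO_def vec_eq_iff)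

lemma maskO_scaleR: "maskO \<Omega> (r *\<^sub>R A) = r *\<^sub>R maskO \<Omega> A"
  by (simp add: maskO_def vec_eq_iff)

lemma maskO_maskO [simp]: "maskO \<Omega> (maskO \<Omega> A) = maskO \<Omega> A"
  by (simp add: maskO_def vec_eq_iff)

lemma inner_maskO_right: "maskO \<Omega> A \<bullet> B = maskO \<Omega> A \<bullet> maskO \<Omega> B"
  unfolding inner_vec_def maskO_def by (auto intro!: sum.cong)

lemma matrix_mult_add_scaleR_left:
  fixes U T :: "real^'r::finite^'m::finite" and V :: "real^'n::finite^'r"
  shows "(U + \<mu> *\<^sub>R T) ** V = U ** V + \<mu> *\<^sub>R (T ** V)"
  by (simp add: matrix_matrix_mult_def vec_eq_iff sum.distrib sum_distrib_left algebra_simps)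

lemma matrix_mult_add_scaleR_right:
  fixes U :: "real^'r::finite^'m::finite" and V T :: "real^'n::finite^'r"
  shows "U ** (V + \<mu> *\<^sub>R T) = U ** V + \<mu> *\<^sub>R (U ** T)"
  by (simp add: matrix_matrix_mult_def vec_eq_iff sum.distrib sum_distrib_left algebra_simps)

lemma inner_matrix_mult_transpose_right:
  fixes A :: "real^'n::finite^'m::finite" and V :: "real^'n^'r::finite" and T :: "real^'r^'m"
  shows "(A ** transpose V) \<bullet> T = A \<bullet> (T ** V)"
proof -
  have "(A ** transpose V) \<bullet> T = (\<Sum>i\<in>UNIV. \<Sum>r\<in>UNIV. \<Sum>j\<in>UNIV. A$i$j * V$r$j * T$i$r)"
    unfolding inner_vec_def matrix_matrix_mult_def transpose_def
    by (simp add: sum_distrib_right)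
  also have "\<dots> = (\<Sum>i\<in>UNIV. \<Sum>j\<in>UNIV. \<Sum>r\<in>UNIV. A$i$j * V$r$j * T$i$r)"
    by (rule sum.cong[OF refl], rule sum.swap)
  also have "\<dots> = A \<bullet> (T ** V)"
    unfolding inner_vec_def matrix_matrix_mult_def
    by (simp add: sum_distrib_left mult_ac)
  finally show ?thesis .
qed

lemma inner_transpose_transpose: "transpose A \<bullet> transpose B = A \<bullet> (B :: real^'n::finite^'m::finite)"
  unfolding inner_vec_def transpose_def by (subst sum.swap) simp

lemma inner_transpose_matrix_mult_left:
  fixes A :: "real^'n::finite^'m::finite" and U :: "real^'r::finite^'m" and T :: "real^'n^'r"
  shows "(transpose U ** A) \<bullet> T = A \<bullet> (U ** T)"
  using inner_matrix_mult_transpose_right[of "transpose A" "transpose U" "transpose T"]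
    inner_transpose_transpose[of "transpose U ** A" T] inner_transpose_transpose[of A "U ** T"]
  by (simp add: matrix_transpose_mul)

lemma norm_exact_line_search_le:
  fixes A B :: "'a::real_inner"
  shows "norm (A - ((A \<bullet> B) / (norm B)\<^sup>2) *\<^sub>R B) \<le> norm A"
proof (cases "B = 0")
  case False
  let ?\<mu> = "(A \<bullet> B) / (norm B)\<^sup>2"
  have nB: "0 < (norm B)\<^sup>2" using False by simp
  have "(norm (A - ?\<mu> *\<^sub>R B))\<^sup>2 = A \<bullet> A - 2 * ?\<mu> * (A \<bullet> B) + ?\<mu>\<^sup>2 * (B \<bullet> B)"
    unfolding power2_norm_eq_inner inner_diff_left inner_diff_right inner_scaleR_left inner_scaleR_right
    by (simp only: inner_commute[of B A]) (simp add: algebra_simps power2_eq_square)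
  also have "\<dots> = (norm A)\<^sup>2 - 2 * ?\<mu> * (A \<bullet> B) + ?\<mu>\<^sup>2 * (norm B)\<^sup>2"
    by (simp only: power2_norm_eq_inner)
  also have "\<dots> = (norm A)\<^sup>2 - (A \<bullet> B)\<^sup>2 / (norm B)\<^sup>2"
    using nB by (simp add: field_simps power2_eq_square)
  also have "\<dots> \<le> (norm A)\<^sup>2"
    by simp
  finally show ?thesis
    using power2_le_imp_le by fastforce
qed simp

lemma norm_residual_sasd_U_le:
  fixes H :: "real^'n::finite^'m::finite" and U :: "real^'r::finite^'m" and V :: "real^'n^'r"
  shows "norm (maskO \<Omega> H - maskO \<Omega> (sasd_U \<Omega> H U V ** V))
    \<le> norm (maskO \<Omega> H - maskO \<Omega> (U ** V))"
proof -
  define A where "A = maskO \<Omega> H - maskO \<Omega> (U ** V)"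
  define T where "T = - (A ** transpose V) ** matrix_inv (V ** transpose V)"
  define B where "B = maskO \<Omega> (T ** V)"
  have "- (A ** transpose V) \<bullet> T = - (A \<bullet> B)"
    using inner_matrix_mult_transpose_right[of A V T] inner_maskO_right[of \<Omega> A "T ** V"]
    by (simp add: A_def B_def maskO_diff)
  then have "sasd_U \<Omega> H U V = U + ((A \<bullet> B) / (norm B)\<^sup>2) *\<^sub>R T"
    by (simp add: sasd_U_def Let_def A_def[symmetric] T_def[symmetric] B_def[symmetric])
  then have "maskO \<Omega> H - maskO \<Omega> (sasd_U \<Omega> H U V ** V) = A - ((A \<bullet> B) / (norm B)\<^sup>2) *\<^sub>R B"
    by (simp add: matrix_mult_add_scaleR_left A_def B_def maskO_diff maskO_add maskO_scaleR)
  then show ?thesis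
    using norm_exact_line_search_le[of A B] by (simp only: A_def[symmetric])
qed

lemma norm_residual_sasd_V_le:
  fixes H :: "real^'n::finite^'m::finite" and U :: "real^'r::finite^'m" and V :: "real^'n^'r"
  shows "norm (maskO \<Omega> H - maskO \<Omega> (U ** sasd_V \<Omega> H U V))
    \<le> norm (maskO \<Omega> H - maskO \<Omega> (U ** V))"
proof -
  define A where "A = maskO \<Omega> H - maskO \<Omega> (U ** V)"
  define T where "T = matrix_inv (transpose U ** U) ** - (transpose U ** A)"
  define B where "B = maskO \<Omega> (U ** T)"
  have "- (transpose U ** A) \<bullet> T = - (A \<bullet> B)"
    using inner_transpose_matrix_mult_left[of U A T] inner_maskO_right[of \<Omega> A "U ** T"]
    by (simp add: A_def B_def maskO_diff)
  then have "sasd_V \<Omega> H U V = V + ((A \<bullet> B) / (norm B)\<^sup>2) *\<^sub>R T"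
    by (simp add: sasd_V_def Let_def A_def[symmetric] T_def[symmetric] B_def[symmetric])
  then have "maskO \<Omega> H - maskO \<Omega> (U ** sasd_V \<Omega> H U V) = A - ((A \<bullet> B) / (norm B)\<^sup>2) *\<^sub>R B"
    by (simp add: matrix_mult_add_scaleR_right A_def B_def maskO_diff maskO_add maskO_scaleR)
  then show ?thesis
    using norm_exact_line_search_le[of A B] by (simp only: A_def[symmetric])
qed

lemma loss_L_eq_sum:
  fixes X :: "real^'n::finite^'m::finite"
  shows "loss_L g c X \<Omega> U V S =
    (\<Sum>(i, j)\<in>\<Omega>. ((X - U ** V) $ i $ j - S $ i $ j)\<^sup>2 / 2 + phi_gc g c (S $ i $ j))"
proof -
  let ?M = "maskO \<Omega> X - maskO \<Omega> (U ** V) - maskO \<Omega> S"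
  have "(norm ?M)\<^sup>2 = (\<Sum>i\<in>UNIV. \<Sum>j\<in>UNIV. (?M $ i $ j)\<^sup>2)"
    unfolding power2_norm_eq_inner inner_vec_def inner_real_def by (simp add: power2_eq_square)
  also have "\<dots> = (\<Sum>(i, j)\<in>UNIV. (?M $ i $ j)\<^sup>2)"
    by (simp add: sum.cartesian_product)
  also have "\<dots> = (\<Sum>(i, j)\<in>\<Omega>. ((X - U ** V) $ i $ j - S $ i $ j)\<^sup>2)"
    by (rule sum.mono_neutral_cong_right) (auto simp: maskO_def)
  finally show ?thesis
    by (simp add: loss_L_def sum_divide_distrib sum.distrib case_prod_beta)
qed

lemma loss_L_eq_fit:
  "loss_L g c X \<Omega> U V S =
    (norm ((maskO \<Omega> X - maskO \<Omega> S) - maskO \<Omega> (U ** V)))\<^sup>2 / 2 + (\<Sum>(i, j)\<in>\<Omega>. phi_gc g c (S $ i $ j))"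
  by (simp add: loss_L_def algebra_simps)

locale rmc_iteration =
  fixes g :: "real \<Rightarrow> real" and \<xi> :: real and X :: "real^'n::finite^'m::finite"
    and \<Omega> :: "('m \<times> 'n) set" and U0 :: "real^'r::finite^'m" and V0 :: "real^'n^'r"
begin

abbreviation U where "U \<equiv> U_it g \<xi> X \<Omega> U0 V0"
abbreviation V where "V \<equiv> V_it g \<xi> X \<Omega> U0 V0"
abbreviation S where "S \<equiv> S_it g \<xi> X \<Omega> U0 V0"
abbreviation c where "c \<equiv> c_it g \<xi> X \<Omega> U0 V0"
abbreviation d where "d \<equiv> d_it g \<xi> X \<Omega> U0 V0"

lemma
  fixes k :: nat
  defines "H \<equiv> maskO \<Omega> X - maskO \<Omega> (S (Suc k))"
  shows S_Suc: "S (Suc k) = (\<chi> i j. if (i, j) \<in> \<Omega> then prox_gc g (c k) ((X - U k ** V k) $ i $ j) else 0)"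
    and U_Suc: "U (Suc k) = sasd_U \<Omega> H (U k) (V k)"
    and V_Suc: "V (Suc k) = sasd_V \<Omega> H (U (Suc k)) (V k)"
proof -
  obtain Uk Vk Sk ck where it: "rmc_iter g \<xi> X \<Omega> U0 V0 k = (Uk, Vk, Sk, ck)"
    by (cases "rmc_iter g \<xi> X \<Omega> U0 V0 k") auto
  then have UVk: "U k = Uk" "V k = Vk"
    by (simp_all add: U_it_def V_it_def)
  have ck: "c k = (if k = 0 then \<xi> * d_scale \<Omega> (X - Uk ** Vk) else min (\<xi> * d_scale \<Omega> (X - Uk ** Vk)) ck)"
    using it by (simp add: c_it_def Let_def)
  show "S (Suc k) = (\<chi> i j. if (i, j) \<in> \<Omega> then prox_gc g (c k) ((X - U k ** V k) $ i $ j) else 0)"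
    unfolding UVk ck using it by (simp add: S_it_def Let_def)
  show "U (Suc k) = sasd_U \<Omega> H (U k) (V k)" and "V (Suc k) = sasd_V \<Omega> H (U (Suc k)) (V k)"
    using it by (simp_all add: H_def S_it_def U_it_def V_it_def Let_def)
qed

lemma c_0: "c 0 = \<xi> * d 0"
  by (simp add: c_it_def d_it_def U_it_def V_it_def Let_def)

lemma c_Suc: "c (Suc k) = min (\<xi> * d (Suc k)) (c k)"
proof -
  obtain Uk Vk Sk ck where "rmc_iter g \<xi> X \<Omega> U0 V0 (Suc k) = (Uk, Vk, Sk, ck)"
    by (cases "rmc_iter g \<xi> X \<Omega> U0 V0 (Suc k)") auto
  then show ?thesis
    by (simp add: c_it_def d_it_def U_it_def V_it_def Let_def)
qed

end

context robust_weight
begin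

lemma loss_L_prox_le:
  fixes X :: "real^'n::finite^'m::finite" and U :: "real^'r::finite^'m"
  assumes c1: "0 < c1" and cc: "c1 \<le> c0"
    and S': "\<And>i j. (i, j) \<in> \<Omega> \<Longrightarrow> S' $ i $ j = prox_gc g c1 ((X - U ** V) $ i $ j)"
    and S: "\<And>i j. (i, j) \<in> \<Omega> \<Longrightarrow> S $ i $ j = prox_gc g c0 (Y $ i $ j)"
  shows "loss_L g c1 X \<Omega> U V S' \<le> loss_L g c1 X \<Omega> U V S"
  unfolding loss_L_eq_sum
proof (rule sum_mono, clarify)
  fix i j assume ij: "(i, j) \<in> \<Omega>"
  let ?D = "(X - U ** V) $ i $ j"
  have "phi_gc g c1 (S' $ i $ j) \<le> l_gc g c1 ?D - (?D - S' $ i $ j)\<^sup>2 / 2"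
    using phi_gc_prox_le[OF c1 order_refl] S'[OF ij] by simp
  moreover have "l_gc g c1 ?D - (?D - S $ i $ j)\<^sup>2 / 2 \<le> phi_gc g c1 (S $ i $ j)"
    using le_phi_gc_prox[OF c1 cc] S[OF ij] by simp
  ultimately show "(?D - S' $ i $ j)\<^sup>2 / 2 + phi_gc g c1 (S' $ i $ j)
      \<le> (?D - S $ i $ j)\<^sup>2 / 2 + phi_gc g c1 (S $ i $ j)"
    by linarith
qed

lemma loss_L_mono_threshold:
  fixes X :: "real^'n::finite^'m::finite" and U :: "real^'r::finite^'m"
  assumes c2: "0 < c2" and cc: "c2 \<le> c1"
    and S: "\<And>i j. (i, j) \<in> \<Omega> \<Longrightarrow> S $ i $ j = prox_gc g c1 (Y $ i $ j)"
  shows "loss_L g c2 X \<Omega> U V S \<le> loss_L g c1 X \<Omega> U V S"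
  unfolding loss_L_eq_sum
proof (rule sum_mono, clarify)
  fix i j assume ij: "(i, j) \<in> \<Omega>"
  have c1: "0 < c1" using c2 cc by simp
  have "phi_gc g c2 (S $ i $ j) \<le> l_gc g c1 (Y $ i $ j) - (Y $ i $ j - S $ i $ j)\<^sup>2 / 2"
    using phi_gc_prox_le[OF c2 cc] S[OF ij] by simp
  also have "\<dots> \<le> phi_gc g c1 (S $ i $ j)"
    using le_phi_gc_prox[OF c1 order_refl] S[OF ij] by simp
  finally show "((X - U ** V) $ i $ j - S $ i $ j)\<^sup>2 / 2 + phi_gc g c2 (S $ i $ j)
      \<le> ((X - U ** V) $ i $ j - S $ i $ j)\<^sup>2 / 2 + phi_gc g c1 (S $ i $ j)"
    by simp
qed

lemma loss_L_nonneg: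
  fixes X :: "real^'n::finite^'m::finite" and U :: "real^'r::finite^'m"
  assumes c1: "0 < c1" and cc: "c1 \<le> c0"
    and S: "\<And>i j. (i, j) \<in> \<Omega> \<Longrightarrow> S $ i $ j = prox_gc g c0 (Y $ i $ j)"
  shows "0 \<le> loss_L g c1 X \<Omega> U V S"
  unfolding loss_L_eq_sum
proof (rule sum_nonneg, clarify)
  fix i j assume ij: "(i, j) \<in> \<Omega>"
  have "l_gc g c1 (S $ i $ j) - (S $ i $ j - S $ i $ j)\<^sup>2 / 2 \<le> phi_gc g c1 (S $ i $ j)"
    using le_phi_gc_prox[OF c1 cc, of "S $ i $ j" "Y $ i $ j"] S[OF ij] by simp
  then have "0 \<le> phi_gc g c1 (S $ i $ j)"
    using l_gc_nonneg[OF c1, of "S $ i $ j"] by simp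
  then show "0 \<le> ((X - U ** V) $ i $ j - S $ i $ j)\<^sup>2 / 2 + phi_gc g c1 (S $ i $ j)"
    by simp
qed

lemma loss_L_sasd_le:
  fixes X S :: "real^'n::finite^'m::finite" and \<Omega> :: "('m \<times> 'n) set" and U :: "real^'r::finite^'m"
  defines "H \<equiv> maskO \<Omega> X - maskO \<Omega> S"
  shows "loss_L g c X \<Omega> (sasd_U \<Omega> H U V) (sasd_V \<Omega> H (sasd_U \<Omega> H U V) V) S
    \<le> loss_L g c X \<Omega> U V S"
proof -
  let ?U = "sasd_U \<Omega> H U V"
  have "maskO \<Omega> H = H"
    by (simp add: H_def maskO_diff)
  moreover have "norm (maskO \<Omega> H - maskO \<Omega> (?U ** sasd_V \<Omega> H ?U V))
      \<le> norm (maskO \<Omega> H - maskO \<Omega> (U ** V))"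
    using norm_residual_sasd_V_le norm_residual_sasd_U_le by (rule order_trans)
  ultimately show ?thesis
    unfolding loss_L_eq_fit H_def[symmetric] by (simp add: power_mono)
qed

end

locale rmc_run = rmc_iteration g \<xi> X \<Omega> U0 V0 + robust_weight g w
  for g w :: "real \<Rightarrow> real" and \<xi> :: real and X :: "real^'n::finite^'m::finite"
    and \<Omega> :: "('m \<times> 'n) set" and U0 :: "real^'r::finite^'m" and V0 :: "real^'n^'r" +
  assumes xi_pos: "0 < \<xi>"
    and d_pos: "\<And>k. 0 < d k"
begin

abbreviation L where "L k \<equiv> loss_L g (c k) X \<Omega> (U k) (V k) (S k)"

lemma c_pos: "0 < c k"
  by (induction k) (simp_all add: c_0 c_Suc xi_pos d_pos)

lemma c_Suc_le: "c (Suc k) \<le> c k"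
  by (simp add: c_Suc)

lemma S_Suc_entry: "(i, j) \<in> \<Omega> \<Longrightarrow> S (Suc k) $ i $ j = prox_gc g (c k) ((X - U k ** V k) $ i $ j)"
  by (simp add: S_Suc)

lemma L_Suc_Suc_le: "L (Suc (Suc k)) \<le> L (Suc k)"
proof -
  let ?H = "maskO \<Omega> X - maskO \<Omega> (S (Suc (Suc k)))"
  have "L (Suc (Suc k)) \<le> loss_L g (c (Suc k)) X \<Omega> (U (Suc (Suc k))) (V (Suc (Suc k))) (S (Suc (Suc k)))"
    by (rule loss_L_mono_threshold[OF c_pos c_Suc_le S_Suc_entry])
  also have "\<dots> = loss_L g (c (Suc k)) X \<Omega> (sasd_U \<Omega> ?H (U (Suc k)) (V (Suc k)))
      (sasd_V \<Omega> ?H (sasd_U \<Omega> ?H (U (Suc k)) (V (Suc k))) (V (Suc k))) (S (Suc (Suc k)))"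
    by (simp add: U_Suc V_Suc)
  also have "\<dots> \<le> loss_L g (c (Suc k)) X \<Omega> (U (Suc k)) (V (Suc k)) (S (Suc (Suc k)))"
    by (rule loss_L_sasd_le)
  also have "\<dots> \<le> L (Suc k)"
    by (rule loss_L_prox_le[OF c_pos c_Suc_le S_Suc_entry S_Suc_entry])
  finally show ?thesis .
qed

lemma L_Suc_nonneg: "0 \<le> L (Suc k)"
  by (rule loss_L_nonneg[OF c_pos c_Suc_le S_Suc_entry])

lemma convergent_L_Suc: "convergent (\<lambda>k. L (Suc k))"
proof -
  have "decseq (\<lambda>k. L (Suc k))"
    by (rule decseq_SucI) (rule L_Suc_Suc_le)
  then obtain l where "(\<lambda>k. L (Suc k)) \<longlonglongrightarrow> l"
    using decseq_convergent L_Suc_nonneg by blast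
  then show ?thesis
    by (auto simp: convergent_def)
qed

end

theorem theorem1:
  fixes X :: "real^'n::finite^'m::finite"
    and \<Omega> :: "('m \<times> 'n) set"
    and U0 :: "real^'r::finite^'m"
    and V0 :: "real^'n^'r"
    and g :: "real \<Rightarrow> real"
    and \<xi> :: real
  assumes loss: "(\<exists>\<sigma>>0. g = g_how \<sigma>) \<or> (\<exists>\<gamma>>0. g = g_hoc \<gamma>) \<or> (\<exists>p. 0 < p \<and> p \<le> 1 \<and> g = g_hop p)"
    and xi_pos: "\<xi> > 0"
    and d_pos: "\<And>k. d_it g \<xi> X \<Omega> U0 V0 k > 0"
    and invV: "\<And>k. invertible (V_it g \<xi> X \<Omega> U0 V0 k ** transpose (V_it g \<xi> X \<Omega> U0 V0 k))"
    and invU: "\<And>k. invertible (transpose (U_it g \<xi> X \<Omega> U0 V0 (Suc k)) ** U_it g \<xi> X \<Omega> U0 V0 (Suc k))"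
  shows "convergent (\<lambda>k. loss_L g (c_it g \<xi> X \<Omega> U0 V0 (Suc k)) X \<Omega>
            (U_it g \<xi> X \<Omega> U0 V0 (Suc k)) (V_it g \<xi> X \<Omega> U0 V0 (Suc k)) (S_it g \<xi> X \<Omega> U0 V0 (Suc k)))"
proof -
  from loss obtain w where w: "robust_weight g w"
    using robust_weight_how robust_weight_hoc robust_weight_hop by fastforce
  interpret rmc_run g w \<xi> X \<Omega> U0 V0
    by (rule rmc_run.intro[OF w rmc_run_axioms.intro[OF xi_pos d_pos]])
  show ?thesis
    by (rule convergent_L_Suc)
qed

end
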